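(* Let $x=\{x_n\}_{n=1}^\infty$ be a complex sequence with $x_n\neq0$ for all $n$ and $\sum_{k=1}^\infty|x_kx_{k+1}|<\infty$. Then $F_n:=\mathfrak{F}\big(\{x_k\}_{k=n}^\infty\big)$, $n\in\mathbb{N}$, is the unique solution of the second order difference equation \[ F_n-F_{n+1}+x_nx_{n+1}F_{n+2}=0,\quad n\in\mathbb{N}, \] satisfying $\lim_{n\to\infty}F_n=1$.
   Context: For a complex sequence $x=\{x_k\}_{k=N}^{\infty}$ with $\sum_{k\ge N}|x_kx_{k+1}|<\infty$, define \[ \mathfrak{F}(x)=1+\sum_{m=1}^\infty(-1)^m\sum_{k_1=N}^\infty\ \sum_{k_2=k_1+2}^\infty\cdots\sum_{k_m=k_{m-1}+2}^\infty x_{k_1}x_{k_1+1}x_{k_2}x_{k_2+1}\cdots x_{k_m}x_{k_m+1}. \] *)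

theory Defs
  imports "HOL-Analysis.Analysis"
begin

definition adm_idx :: "nat \<Rightarrow> nat \<Rightarrow> nat list set" where
  "adm_idx N m = {ks. length ks = m \<and> (\<forall>k\<in>set ks. N \<le> k) \<and>
                      sorted_wrt (\<lambda>a b. a + 2 \<le> b) ks}"

definition pair_prod :: "(nat \<Rightarrow> complex) \<Rightarrow> nat list \<Rightarrow> complex" where
  "pair_prod x ks = prod_list (map (\<lambda>k. x k * x (Suc k)) ks)"

definition frakF :: "(nat \<Rightarrow> complex) \<Rightarrow> nat \<Rightarrow> complex" where
  "frakF x N = 1 + (\<Sum>m. (-1) ^ Suc m * infsum (pair_prod x) (adm_idx N (Suc m)))"

end

theory Submission
  imports Defs
begin

text \<open>
  Write e_m(N) for the sum of \<open>pair_prod x\<close> over \<open>adm_idx N m\<close> and T_N for the tail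
  \<open>\<Sum>k\<ge>N. |x k * x (k+1)|\<close>. Splitting admissible tuples according to whether
  k_1 = N gives e_(m+1)(N) = x_N x_(N+1) e_m(N+2) + e_(m+1)(N+1), and the same splitting
  proves |e_m(N)| \<le> T_N^m / m! by induction. Hence all series converge absolutely,
  the recurrence for e sums to the difference equation, and |F_N - 1| \<le> exp T_N - 1,
  which tends to 0.

  For uniqueness let D = G - F. The Casoratian W_n = F_n D_(n+1) - F_(n+1) D_n satisfies
  W_n = x_n x_(n+1) W_(n+1) and tends to 0; as the coefficients tend to 0, W vanishes
  eventually. Then D/F is eventually constant with limit 0, so D vanishes eventually,
  and the recurrence carries D = 0 back to every n \<ge> 1.
\<close>

lemma adm_idx_0: "adm_idx N 0 = {[]}"
  by (auto simp: adm_idx_def)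

lemma adm_idx_Suc:
  "adm_idx N (Suc m) = Cons N ` adm_idx (N + 2) m \<union> adm_idx (Suc N) (Suc m)"
proof (rule set_eqI)
  fix ks
  show "ks \<in> adm_idx N (Suc m) \<longleftrightarrow> ks \<in> Cons N ` adm_idx (N + 2) m \<union> adm_idx (Suc N) (Suc m)"
  proof (cases ks)
    case (Cons k ks')
    then show ?thesis
      by (cases "k = N") (fastforce simp: adm_idx_def)+
  qed (auto simp: adm_idx_def)
qed

lemma adm_idx_Suc_disjoint: "Cons N ` adm_idx (N + 2) m \<inter> adm_idx (Suc N) (Suc m) = {}"
  by (auto simp: adm_idx_def)

lemma finite_adm_idx_lists: "finite (adm_idx N m \<inter> lists {..<M})"
  by (rule finite_subset[OF _ finite_lists_length_eq[of "{..<M}" m]]) (auto simp: adm_idx_def)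

lemma adm_idx_lists_empty: "M \<le> N \<Longrightarrow> adm_idx N (Suc m) \<inter> lists {..<M} = {}"
  by (auto simp: adm_idx_def length_Suc_conv)

lemma pair_prod_Nil [simp]: "pair_prod x [] = 1"
  by (simp add: pair_prod_def)

lemma pair_prod_Cons [simp]: "pair_prod x (k # ks) = x k * x (Suc k) * pair_prod x ks"
  by (simp add: pair_prod_def)

definition adm_sum :: "(nat \<Rightarrow> complex) \<Rightarrow> nat \<Rightarrow> nat \<Rightarrow> complex" where
  "adm_sum x N m = infsum (pair_prod x) (adm_idx N m)"

lemma adm_sum_0: "adm_sum x N 0 = 1"
  by (simp add: adm_sum_def adm_idx_0)

lemma frakF_eq_adm_sum: "frakF x N = 1 + (\<Sum>m. (-1) ^ Suc m * adm_sum x N (Suc m))"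
  by (simp add: frakF_def adm_sum_def)

definition pair_norm :: "(nat \<Rightarrow> complex) \<Rightarrow> nat \<Rightarrow> real" where
  "pair_norm x k = norm (x k * x (Suc k))"

definition pair_tail :: "(nat \<Rightarrow> complex) \<Rightarrow> nat \<Rightarrow> real" where
  "pair_tail x N = (\<Sum>k. pair_norm x (k + N))"

lemma pair_norm_nonneg: "pair_norm x k \<ge> 0"
  by (simp add: pair_norm_def)

lemma power_Suc_add_ge:
  fixes b t :: real
  assumes "b \<ge> 0" "t \<ge> 0"
  shows "t ^ Suc m + real (Suc m) * b * t ^ m \<le> (b + t) ^ Suc m"
proof (induction m)
  case (Suc m)
  have "t ^ Suc (Suc m) + real (Suc (Suc m)) * b * t ^ Suc m
      \<le> (b + t) * (t ^ Suc m + real (Suc m) * b * t ^ m)"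
    using assms by (simp add: algebra_simps)
  also have "\<dots> \<le> (b + t) * (b + t) ^ Suc m"
    using Suc assms by (intro mult_left_mono) auto
  finally show ?case by simp
qed simp

lemma power_div_fact_add_le:
  fixes b s t :: real
  assumes "b \<ge> 0" "0 \<le> s" "s \<le> t"
  shows "b * (s ^ m / fact m) + t ^ Suc m / fact (Suc m) \<le> (b + t) ^ Suc m / fact (Suc m)"
proof -
  have "b * (s ^ m / fact m) = real (Suc m) * b * s ^ m / fact (Suc m)"
    by (simp add: divide_simps del: of_nat_Suc)
  also have "\<dots> \<le> real (Suc m) * b * t ^ m / fact (Suc m)"
    using assms by (intro divide_right_mono mult_left_mono power_mono) auto
  finally have "b * (s ^ m / fact m) + t ^ Suc m / fact (Suc m)
      \<le> (t ^ Suc m + real (Suc m) * b * t ^ m) / fact (Suc m)"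
    by (simp add: add_divide_distrib)
  also have "\<dots> \<le> (b + t) ^ Suc m / fact (Suc m)"
    using power_Suc_add_ge[OF assms(1), of t m] assms by (intro divide_right_mono) auto
  finally show ?thesis .
qed

lemma exp_minus_one_sums: "(\<lambda>m. t ^ Suc m / fact (Suc m)) sums (exp t - 1)" for t :: real
  using exp_converges[of t] sums_Suc_iff[of "\<lambda>m. t ^ m / fact m"] by (simp add: divide_inverse_commute)

context
  fixes x :: "nat \<Rightarrow> complex"
  assumes summable: "summable (pair_norm x)"
begin

lemma pair_tail_Suc: "pair_tail x N = pair_norm x N + pair_tail x (Suc N)"
  using suminf_split_head[OF summable_ignore_initial_segment[OF summable, of N]]
  by (simp add: pair_tail_def)

lemma pair_tail_nonneg: "pair_tail x N \<ge> 0"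
  unfolding pair_tail_def
  by (intro suminf_nonneg summable_ignore_initial_segment summable pair_norm_nonneg)

lemma pair_tail_antimono: "N \<le> M \<Longrightarrow> pair_tail x M \<le> pair_tail x N"
proof (induction M rule: dec_induct)
  case (step M)
  then show ?case
    using pair_tail_Suc[of M] pair_norm_nonneg[of x M] by simp
qed simp

lemma pair_tail_tendsto_0: "pair_tail x \<longlonglongrightarrow> 0"
proof -
  have "pair_tail x = (\<lambda>N. suminf (pair_norm x) - (\<Sum>k<N. pair_norm x k))"
    by (rule ext) (simp add: pair_tail_def suminf_minus_initial_segment[OF summable])
  moreover have "(\<lambda>N. suminf (pair_norm x) - (\<Sum>k<N. pair_norm x k)) \<longlonglongrightarrow> 0"
    using tendsto_diff[OF tendsto_const summable_LIMSEQ[OF summable], of "suminf (pair_norm x)"]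
    by simp
  ultimately show ?thesis by simp
qed

lemma sum_norm_pair_prod_lists_le:
  "(\<Sum>ks\<in>adm_idx N m \<inter> lists {..<M}. norm (pair_prod x ks)) \<le> pair_tail x N ^ m / fact m"
  \<comment> \<open>Restricting to indices below M makes the sum finite and the induction well-founded.\<close>
proof (induction "M - N" arbitrary: N m rule: less_induct)
  case less
  show ?case
  proof (cases m)
    case 0
    then show ?thesis by (simp add: adm_idx_0)
  next
    case (Suc m)
    show ?thesis
    proof (cases "M \<le> N")
      case True
      then show ?thesis using Suc by (simp add: adm_idx_lists_empty pair_tail_nonneg)
    next
      case False
      let ?L = "lists {..<M}" and ?S = "\<lambda>A. \<Sum>ks\<in>A. norm (pair_prod x ks)"
      have "Cons N ` A \<inter> ?L = Cons N ` (A \<inter> ?L)" for A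
        using False by (auto simp: image_iff)
      then have split: "adm_idx N (Suc m) \<inter> ?L
          = Cons N ` (adm_idx (N + 2) m \<inter> ?L) \<union> (adm_idx (Suc N) (Suc m) \<inter> ?L)"
        by (subst adm_idx_Suc) (simp add: Int_Un_distrib2)
      have "?S (Cons N ` (adm_idx (N + 2) m \<inter> ?L)) = pair_norm x N * ?S (adm_idx (N + 2) m \<inter> ?L)"
        by (simp add: sum.reindex sum_distrib_left norm_mult pair_norm_def mult.assoc)
      also have "\<dots> \<le> pair_norm x N * (pair_tail x (N + 2) ^ m / fact m)"
        using less(1)[of "N + 2" m] False by (intro mult_left_mono pair_norm_nonneg) simp
      finally have head: "?S (Cons N ` (adm_idx (N + 2) m \<inter> ?L))
          \<le> pair_norm x N * (pair_tail x (N + 2) ^ m / fact m)" .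
      have rest: "?S (adm_idx (Suc N) (Suc m) \<inter> ?L) \<le> pair_tail x (Suc N) ^ Suc m / fact (Suc m)"
        using less(1)[of "Suc N" "Suc m"] False by simp
      have "?S (adm_idx N (Suc m) \<inter> ?L)
          = ?S (Cons N ` (adm_idx (N + 2) m \<inter> ?L)) + ?S (adm_idx (Suc N) (Suc m) \<inter> ?L)"
        unfolding split
        by (rule sum.union_disjoint) (use adm_idx_Suc_disjoint finite_adm_idx_lists in auto)
      also have "\<dots> \<le> pair_norm x N * (pair_tail x (N + 2) ^ m / fact m)
                      + pair_tail x (Suc N) ^ Suc m / fact (Suc m)"
        using head rest by simp
      also have "\<dots> \<le> (pair_norm x N + pair_tail x (Suc N)) ^ Suc m / fact (Suc m)"
        by (intro power_div_fact_add_le pair_norm_nonneg pair_tail_nonneg pair_tail_antimono) simp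
      also have "\<dots> = pair_tail x N ^ Suc m / fact (Suc m)"
        by (simp flip: pair_tail_Suc)
      finally show ?thesis using Suc by simp
    qed
  qed
qed

lemma sum_norm_pair_prod_le:
  assumes "finite F" "F \<subseteq> adm_idx N m"
  shows "(\<Sum>ks\<in>F. norm (pair_prod x ks)) \<le> pair_tail x N ^ m / fact m"
proof -
  obtain M where "\<forall>k\<in>(\<Union>ks\<in>F. set ks). k < M"
    using finite_nat_bounded[of "\<Union>ks\<in>F. set ks"] assms(1) by auto
  then have "F \<subseteq> adm_idx N m \<inter> lists {..<M}"
    using assms(2) by auto
  then have "(\<Sum>ks\<in>F. norm (pair_prod x ks)) \<le> (\<Sum>ks\<in>adm_idx N m \<inter> lists {..<M}. norm (pair_prod x ks))"
    by (intro sum_mono2 finite_adm_idx_lists) auto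
  also have "\<dots> \<le> pair_tail x N ^ m / fact m"
    by (rule sum_norm_pair_prod_lists_le)
  finally show ?thesis .
qed

lemma norm_pair_prod_summable_on: "(\<lambda>ks. norm (pair_prod x ks)) summable_on adm_idx N m"
  by (rule nonneg_bdd_above_summable_on, simp,
      rule bdd_aboveI[of _ "pair_tail x N ^ m / fact m"]) (use sum_norm_pair_prod_le in blast)

lemma pair_prod_summable_on: "pair_prod x summable_on adm_idx N m"
  using norm_pair_prod_summable_on by (rule abs_summable_summable)

lemma norm_adm_sum_le: "norm (adm_sum x N m) \<le> pair_tail x N ^ m / fact m"
proof -
  have "norm (adm_sum x N m) \<le> infsum (\<lambda>ks. norm (pair_prod x ks)) (adm_idx N m)"
    unfolding adm_sum_def by (rule norm_infsum_bound) (use norm_pair_prod_summable_on in simp)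
  also have "\<dots> \<le> pair_tail x N ^ m / fact m"
    by (rule infsum_le_finite_sums[OF norm_pair_prod_summable_on sum_norm_pair_prod_le])
  finally show ?thesis .
qed

lemma adm_sum_Suc:
  "adm_sum x N (Suc m) = x N * x (Suc N) * adm_sum x (N + 2) m + adm_sum x (Suc N) (Suc m)"
proof -
  have head: "pair_prod x summable_on Cons N ` adm_idx (N + 2) m"
    by (rule summable_on_subset_banach[OF pair_prod_summable_on[of N "Suc m"]])
       (auto simp: adm_idx_Suc[of N m])
  have "adm_sum x N (Suc m)
      = infsum (pair_prod x) (Cons N ` adm_idx (N + 2) m) + adm_sum x (Suc N) (Suc m)"
    unfolding adm_sum_def adm_idx_Suc[of N m]
    by (rule infsum_Un_disjoint[OF head pair_prod_summable_on adm_idx_Suc_disjoint])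
  also have "infsum (pair_prod x) (Cons N ` adm_idx (N + 2) m) = x N * x (Suc N) * adm_sum x (N + 2) m"
    by (subst infsum_reindex) (simp_all add: inj_on_def o_def adm_sum_def infsum_cmult_right')
  finally show ?thesis .
qed

lemma summable_alternating_adm_sum: "summable (\<lambda>m. (-1) ^ m * adm_sum x N m)"
  by (rule summable_norm_cancel, rule summable_comparison_test'[OF summable_exp[of "pair_tail x N"]])
     (use norm_adm_sum_le in \<open>simp add: norm_mult norm_power divide_inverse_commute\<close>)

lemma frakF_eq_suminf: "frakF x N = (\<Sum>m. (-1) ^ m * adm_sum x N m)"
  using suminf_split_head[OF summable_alternating_adm_sum[of N]]
  by (simp add: frakF_eq_adm_sum adm_sum_0)

lemma frakF_recurrence:
  "frakF x N - frakF x (Suc N) + x N * x (Suc N) * frakF x (Suc (Suc N)) = 0"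
proof -
  have tail: "summable (\<lambda>m. (-1) ^ Suc m * adm_sum x N (Suc m))" for N
    using summable_alternating_adm_sum[of N] by (subst summable_Suc_iff)
  have "(\<Sum>m. (-1) ^ Suc m * adm_sum x N (Suc m))
      = (\<Sum>m. (-1) ^ Suc m * adm_sum x (Suc N) (Suc m)
              - x N * x (Suc N) * ((-1) ^ m * adm_sum x (Suc (Suc N)) m))"
    by (simp add: adm_sum_Suc[of N] algebra_simps)
  also have "\<dots> = (\<Sum>m. (-1) ^ Suc m * adm_sum x (Suc N) (Suc m))
                  - x N * x (Suc N) * (\<Sum>m. (-1) ^ m * adm_sum x (Suc (Suc N)) m)"
    using suminf_diff[OF tail[of "Suc N"] summable_mult[OF summable_alternating_adm_sum[of "Suc (Suc N)"]]]
    by (simp add: suminf_mult summable_alternating_adm_sum)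
  finally show ?thesis
    unfolding frakF_eq_adm_sum[of x N] frakF_eq_adm_sum[of x "Suc N"] frakF_eq_suminf[of "Suc (Suc N)"]
    by (simp add: algebra_simps)
qed

lemma norm_frakF_minus_1_le: "norm (frakF x N - 1) \<le> exp (pair_tail x N) - 1"
proof -
  have "norm ((-1) ^ Suc m * adm_sum x N (Suc m)) \<le> pair_tail x N ^ Suc m / fact (Suc m)" for m
    using norm_adm_sum_le[of N "Suc m"] by (simp add: norm_mult norm_power)
  then have "norm (\<Sum>m. (-1) ^ Suc m * adm_sum x N (Suc m))
      \<le> (\<Sum>m. pair_tail x N ^ Suc m / fact (Suc m))"
    by (rule norm_suminf_le) (use exp_minus_one_sums sums_summable in blast)+
  then show ?thesis
    using sums_unique[OF exp_minus_one_sums] by (simp add: frakF_eq_adm_sum)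
qed

lemma frakF_tendsto_1: "(\<lambda>N. frakF x N) \<longlonglongrightarrow> 1"
proof -
  have "(\<lambda>N. exp (pair_tail x N) - 1) \<longlonglongrightarrow> exp 0 - 1"
    using pair_tail_tendsto_0 by (intro tendsto_diff tendsto_exp tendsto_const)
  then have bound_tendsto_0: "(\<lambda>N. exp (pair_tail x N) - 1) \<longlonglongrightarrow> 0"
    by simp
  have "(\<lambda>N. frakF x N - 1) \<longlonglongrightarrow> 0"
    by (rule Lim_null_comparison[OF _ bound_tendsto_0]) (simp add: norm_frakF_minus_1_le)
  then show ?thesis
    by (simp add: LIM_zero_iff)
qed

end

lemma eventually_zero_if_contracting:
  fixes W a :: "nat \<Rightarrow> 'a::real_normed_field"
  assumes "\<forall>\<^sub>F n in sequentially. W n = a n * W (Suc n)" and "a \<longlonglongrightarrow> 0" and "W \<longlonglongrightarrow> 0"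
  shows "\<forall>\<^sub>F n in sequentially. W n = 0"
proof -
  have "\<forall>\<^sub>F n in sequentially. norm (a n) < 1"
    using order_tendstoD(2)[OF tendsto_norm[OF assms(2)]] by simp
  with assms(1) have "\<forall>\<^sub>F n in sequentially. W n = a n * W (Suc n) \<and> norm (a n) < 1"
    by (rule eventually_conj)
  then obtain K where K: "\<And>n. n \<ge> K \<Longrightarrow> W n = a n * W (Suc n) \<and> norm (a n) < 1"
    unfolding eventually_sequentially by blast
  have le_shift: "norm (W n) \<le> norm (W (j + n))" if "n \<ge> K" for n j
  proof (induction j)
    case (Suc j)
    have "norm (W (j + n)) = norm (a (j + n)) * norm (W (Suc j + n))"
      using K[of "j + n"] that by (simp add: norm_mult)
    also have "\<dots> \<le> norm (W (Suc j + n))"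
      using K[of "j + n"] that by (simp add: mult_left_le_one_le)
    finally show ?case using Suc by simp
  qed simp
  have "W n = 0" if "n \<ge> K" for n
  proof -
    have "(\<lambda>j. norm (W (j + n))) \<longlonglongrightarrow> 0"
      using tendsto_norm[OF LIMSEQ_ignore_initial_segment[OF assms(3), of n]] by simp
    then have "norm (W n) \<le> 0"
      by (rule LIMSEQ_le_const) (use le_shift[OF that] in auto)
    then show ?thesis by simp
  qed
  then show ?thesis
    unfolding eventually_sequentially by blast
qed

lemma eventually_zero_if_proportional:
  fixes F D :: "nat \<Rightarrow> 'a::real_normed_field"
  assumes "\<forall>\<^sub>F n in sequentially. F n * D (Suc n) = F (Suc n) * D n"
    and "F \<longlonglongrightarrow> 1" and "D \<longlonglongrightarrow> 0"
  shows "\<forall>\<^sub>F n in sequentially. D n = 0"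
proof -
  have "\<forall>\<^sub>F n in sequentially. F n \<noteq> 0"
    using tendsto_imp_eventually_ne[OF assms(2)] by simp
  with assms(1) have "\<forall>\<^sub>F n in sequentially. F n * D (Suc n) = F (Suc n) * D n \<and> F n \<noteq> 0"
    by (rule eventually_conj)
  then obtain K where K: "\<And>n. n \<ge> K \<Longrightarrow> F n * D (Suc n) = F (Suc n) * D n \<and> F n \<noteq> 0"
    unfolding eventually_sequentially by blast
  define r where "r n = D n / F n" for n
  have r_const: "r (j + K) = r K" for j
  proof (induction j)
    case (Suc j)
    have "r (Suc j + K) = r (j + K)"
      using K[of "j + K"] K[of "Suc j + K"] by (simp add: r_def field_simps)
    then show ?case
      using Suc by simp
  qed simp
  have "(\<lambda>j. r (j + K)) \<longlonglongrightarrow> 0 / 1"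
    unfolding r_def using LIMSEQ_ignore_initial_segment assms(2,3) by (intro tendsto_divide) auto
  then have "r K = 0"
    by (simp add: r_const LIMSEQ_const_iff)
  then have "D n = 0" if "n \<ge> K" for n
    using r_const[of "n - K"] K[OF that] K[of K] that by (simp add: r_def)
  then show ?thesis
    unfolding eventually_sequentially by blast
qed

lemma recurrence_zero_if_eventually_zero:
  fixes D a :: "nat \<Rightarrow> 'a::comm_ring"
  assumes rec: "\<forall>n\<ge>1. D n - D (Suc n) + a n * D (Suc (Suc n)) = 0"
    and "\<forall>\<^sub>F n in sequentially. D n = 0"
  shows "\<forall>n\<ge>1. D n = 0"
proof -
  obtain K where K: "\<And>n. n \<ge> K \<Longrightarrow> D n = 0"
    using assms(2) unfolding eventually_sequentially by blast
  have "\<forall>n\<ge>1. K \<le> n + d \<longrightarrow> D n = 0" for d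
  proof (induction d)
    case (Suc d)
    show ?case
    proof (intro allI impI)
      fix n assume n: "n \<ge> 1" "K \<le> n + Suc d"
      then have "D (Suc n) = 0" "D (Suc (Suc n)) = 0"
        using Suc by auto
      then show "D n = 0"
        using rec[rule_format, OF n(1)] by simp
    qed
  qed (use K in simp)
  then show ?thesis
    by (metis le_add2)
qed

lemma recurrence_solution_unique:
  fixes F G a :: "nat \<Rightarrow> 'a::real_normed_field"
  assumes F_rec: "\<forall>n\<ge>1. F n - F (Suc n) + a n * F (Suc (Suc n)) = 0"
    and G_rec: "\<forall>n\<ge>1. G n - G (Suc n) + a n * G (Suc (Suc n)) = 0"
    and F_lim: "F \<longlonglongrightarrow> 1" and G_lim: "G \<longlonglongrightarrow> 1" and a_lim: "a \<longlonglongrightarrow> 0"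
  shows "\<forall>n\<ge>1. G n = F n"
proof -
  define D where "D n = G n - F n" for n
  define W where "W n = F n * D (Suc n) - F (Suc n) * D n" for n
  have D_rec: "\<forall>n\<ge>1. D n - D (Suc n) + a n * D (Suc (Suc n)) = 0"
  proof (intro allI impI)
    fix n :: nat
    assume "n \<ge> 1"
    then have "(G n - G (Suc n) + a n * G (Suc (Suc n))) - (F n - F (Suc n) + a n * F (Suc (Suc n))) = 0"
      using F_rec G_rec by simp
    then show "D n - D (Suc n) + a n * D (Suc (Suc n)) = 0"
      by (simp add: D_def algebra_simps)
  qed
  have D_lim: "D \<longlonglongrightarrow> 0"
    using tendsto_diff[OF G_lim F_lim] by (simp add: D_def[abs_def])
  have "W n = a n * W (Suc n)" if "n \<ge> 1" for n
  proof -
    have "F n = F (Suc n) - a n * F (Suc (Suc n))" "D n = D (Suc n) - a n * D (Suc (Suc n))"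
      using F_rec D_rec that by (auto simp: algebra_simps eq_neg_iff_add_eq_0)
    then have "W n = (F (Suc n) - a n * F (Suc (Suc n))) * D (Suc n)
                     - F (Suc n) * (D (Suc n) - a n * D (Suc (Suc n)))"
      by (simp only: W_def)
    then show ?thesis
      by (simp add: W_def algebra_simps)
  qed
  then have W_rec: "\<forall>\<^sub>F n in sequentially. W n = a n * W (Suc n)"
    unfolding eventually_sequentially by blast
  have W_lim: "W \<longlonglongrightarrow> 0"
    using tendsto_diff[OF tendsto_mult[OF F_lim LIMSEQ_Suc[OF D_lim]] tendsto_mult[OF LIMSEQ_Suc[OF F_lim] D_lim]]
    by (simp add: W_def[abs_def])
  have "\<forall>\<^sub>F n in sequentially. W n = 0"
    by (rule eventually_zero_if_contracting[OF W_rec a_lim W_lim])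
  then have "\<forall>\<^sub>F n in sequentially. F n * D (Suc n) = F (Suc n) * D n"
    by (simp add: W_def)
  then have "\<forall>\<^sub>F n in sequentially. D n = 0"
    using F_lim D_lim by (rule eventually_zero_if_proportional)
  then show ?thesis
    using recurrence_zero_if_eventually_zero[OF D_rec] by (simp add: D_def)
qed

theorem mainTheorem2:
  fixes x :: "nat \<Rightarrow> complex"
  assumes nz: "\<And>n. n \<ge> 1 \<Longrightarrow> x n \<noteq> 0"
    and summ: "summable (\<lambda>k. norm (x (Suc k) * x (Suc (Suc k))))"
  shows "(\<forall>n\<ge>1. frakF x n - frakF x (Suc n) + x n * x (Suc n) * frakF x (Suc (Suc n)) = 0)
       \<and> (\<lambda>n. frakF x n) \<longlonglongrightarrow> 1
       \<and> (\<forall>G :: nat \<Rightarrow> complex.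
             (\<forall>n\<ge>1. G n - G (Suc n) + x n * x (Suc n) * G (Suc (Suc n)) = 0)
             \<and> G \<longlonglongrightarrow> 1
             \<longrightarrow> (\<forall>n\<ge>1. G n = frakF x n))"
proof -
  have summable: "summable (pair_norm x)"
    using summ summable_Suc_iff[of "pair_norm x"] by (simp add: pair_norm_def)
  have rec: "\<forall>n\<ge>1. frakF x n - frakF x (Suc n) + x n * x (Suc n) * frakF x (Suc (Suc n)) = 0"
    using frakF_recurrence[OF summable] by blast
  have coeff_lim: "(\<lambda>n. x n * x (Suc n)) \<longlonglongrightarrow> 0"
    using summable_LIMSEQ_zero[OF summable] unfolding pair_norm_def[abs_def] tendsto_norm_zero_iff .
  show ?thesis
    using rec frakF_tendsto_1[OF summable]
      recurrence_solution_unique[OF rec _ frakF_tendsto_1[OF summable] _ coeff_lim]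
    by blast
qed

end
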